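(* Let $r(\mathcal{C},R)$ be a reachability rule and $\mathrm{H}:=\mathrm{H}(\mathbf{G}(r(\mathcal{C},R)))$. If $\mathrm{H}'$ is a fracturable subset of $\mathrm{H}$ (in $\mathsf{DG}(\mathrm H)$), then $r(\mathcal{C},R)\preceq\ \triangleright^{0} pw\ \triangleright^{1} r(\mathcal{C},R)\ominus\mathbf{G}(\mathrm{H}')\ \triangleright^{0}\mathrm{H}'$.
   Context: Fix a countably infinite set $\mathtt{S}$ of sequents (atomic labels), a set $\mathcal{U}$ of vertices, and a non-empty finite set $\mathtt{E}$ of edge types. A g-sequent is $\mathcal{G}=(\mathcal{V},\mathcal{E},\mathcal{L})$ with $\mathcal{V}\subseteq\mathcal{U}$, $\mathcal{E}=\{\mathcal{E}_a\mid a\in\mathtt{E}\}$, $\mathcal{E}_a\subseteq\mathcal{V}\times\mathcal{V}$, $\mathcal{L}:\mathcal{V}\to\mathtt{S}$; $\mathcal U(\mathcal G)=\mathcal V$; written $\Gamma\vdash\Delta$ with $\Gamma$ the set of edge atoms $w\mathcal{E}_a u$ and $\Delta$ the set of prefixed sequents $w:S$; $\mathtt{PS}=\mathcal U\times\mathtt S$; commas denote disjoint union. Let $\overline{\mathtt E}=\{\bar a\mid a\in\mathtt E\}$, $\bar{\bar z}=z$, $\overline{x_1\cdots x_n}=\bar x_n\cdots\bar x_1$, $\varepsilon$ empty string. Paths: $\mathcal{G}\models u\xrightarrow{a}w$ iff $(u,w)\in\mathcal{E}_a$; $u\xrightarrow{\bar a}w$ iff $(w,u)\in\mathcal{E}_a$;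 $u\xrightarrow{\varepsilon}w$ iff $u=w$; $u\xrightarrow{xs}w$ iff some $v$ has $u\xrightarrow{x}v$, $v\xrightarrow{s}w$; $u\xrightarrow{\mathscr L}w$ iff $u\xrightarrow{s}w$ for some $s\in\mathscr L$. An $\mathtt E$-system is a finite set $\mathbf G$ of production rules $x\longrightarrow t$ ($x\in\mathtt E\cup\overline{\mathtt E}$) with $x\longrightarrow t\in\mathbf G$ iff $\bar x\longrightarrow\bar t\in\mathbf G$; $\mathbf G(s)=\{t\mid s\longrightarrow^*_{\mathbf G}t\}$. For $p=x\longrightarrow t$, $\bar p=\bar x\longrightarrow\bar t$; $(p,\bar p)$ is a production pair; $P(\mathbf G)$ is the set of such pairs. A sequent constraint $R\subseteq\mathtt S^n\times2^{\mathtt{PS}}$ is satisfied by $S_1,\dots,S_n,\Delta$ iff $(S_{\pi(1)},\dots,S_{\pi(n)},\Delta)\in R$ for some permutation $\pi$. A reachability rule $r(\mathcal C,R)$ has premises $\Gamma\vdash\Delta,w:S_i,u:S'_i$ ($i\in[n]$) and conclusion $\Gamma\vdash\Delta,w:S,u:S'$, where $\mathcal C=(C_1,\dots,C_n)$, $C_i=(\{w,u\},\{(w,u)\},L_i)$ with $L_i(w,u)=\mathbf G_i(a_i)$ ($a_i\in\mathtt E$, $\mathbf G_i$ an $\mathtt E$-system), the $i$-th premise satisfies $\mathcal G\models w\xrightarrow{\mathbf G_i(a_i)}u$, and $S_1,S'_1,\dots,S_n,S'_n,S,S',\Delta$ satisfy $R$. $\mathbf G(r(\mathcal C,R))=\bigcup_i\mathbf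 G_i$. Fracture: $r(\mathcal C,R)\ominus\mathbf G$ replaces each label $\mathbf G_i(a_i)$ by $(\mathbf G_i\setminus\mathbf G)(a_i)$. Horn rules: for $s=x_1\cdots x_n$, $w\mathcal E_s u$ abbreviates atoms $w\mathcal E_{x_1}v_1,\dots,v_{n-1}\mathcal E_{x_n}u$ ($v\mathcal E_{\bar a}z$ means $z\mathcal E_a v$; $w\mathcal E_\varepsilon u$ means $w=u$). Forward Horn rule $h_f$: premise $\Gamma,w\mathcal{E}_s u,w\mathcal{E}_a u\vdash\Delta$, conclusion $\Gamma,w\mathcal{E}_s u\vdash\Delta$; backward $h_b$: same with $u\mathcal E_a w$ in place of $w\mathcal E_a u$. $\mathbf{G}(h_f)=\{a\longrightarrow s,\bar a\longrightarrow\bar s\}$, $\mathbf{G}(h_b)=\{\bar a\longrightarrow s,a\longrightarrow\bar s\}$, $\mathbf G(\mathrm H)=\bigcup_{h\in\mathrm H}\mathbf G(h)$. For a pair $(p,\bar p)$ with $p=a\longrightarrow s$ (resp. $\bar a\longrightarrow s$), $\mathrm H(p,\bar p)$ is the corresponding forward (resp. backward) Horn rule; $\mathrm H(\mathbf G)=\bigcup_{(p,\bar p)\in P(\mathbf G)}\mathrm H(p,\bar p)$. Dependency graph: for distinct pairs with $p=x\longrightarrow s$, $p'=y\longrightarrow t$, $(p,\bar p)\sqsubset(p',\bar p')$ iff $s$ or $\bar s$ contains $y$; $\sqsubseteq$ its reflexive-transitive closure; $\mathsf{DG}(\mathrm H)=(\mathrm H,\sqsubseteq')$ with $h\sqsubseteq'h'$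 iff the pair of $h$ is $\sqsubseteq$ that of $h'$. $V'\subseteq V$ is fracturable in $(V,\sqsubseteq)$ iff no $v\in V'$, $v'\in V\setminus V'$ have $v\sqsubseteq v'$. The path weakening rule $pw$ has premise $\Gamma\vdash\Delta$ and conclusion $\Gamma,\Sigma\vdash\Delta$ with $\Sigma=w\mathcal E_a u$ for some $a\in\mathtt E$ and $w,u\in\mathcal U(\Gamma\vdash\Delta)$. Simulation: $\mathrm R_1\preceq\mathrm R_2$ iff whatever is derivable from given g-sequents using $\mathrm R_1$ is derivable from them using $\mathrm R_2$. An ordered rule set $\triangleright^{i_1}\mathrm R_1\cdots\triangleright^{i_k}\mathrm R_k$ ($i_j\in\{0,1\}$) is $\mathrm R_1\cup\dots\cup\mathrm R_k$ restricted to derivations that (top to bottom) first apply at least $i_1$ rules from $\mathrm R_1$, then at least $i_2$ rules from $\mathrm R_2$, etc.; singletons written by their element. *)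

theory Defs
  imports Main "HOL-Library.Countable" "HOL-Combinatorics.Permutations"
begin

text \<open>Letters of the alphabet E united with bar-E: Fw a is a, Bw a is the barred a.\<close>
datatype 'e letter = Fw 'e | Bw 'e

fun lbar :: "'e letter \<Rightarrow> 'e letter" where
  "lbar (Fw a) = Bw a"
| "lbar (Bw a) = Fw a"

definition sbar :: "'e letter list \<Rightarrow> 'e letter list" where
  "sbar s = rev (map lbar s)"

type_synonym 'e production = "'e letter \<times> 'e letter list"

definition pbar :: "'e production \<Rightarrow> 'e production" where
  "pbar p = (lbar (fst p), sbar (snd p))"

definition esystem :: "'e production set \<Rightarrow> bool" where
  "esystem G \<longleftrightarrow> finite G \<and> (\<forall>x t. (x, t) \<in> G \<longleftrightarrow> (lbar x, sbar t) \<in> G)"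

definition gstep :: "'e production set \<Rightarrow> ('e letter list \<times> 'e letter list) set" where
  "gstep G = {(u @ [x] @ v, u @ t @ v) | u x t v. (x, t) \<in> G}"

definition glang :: "'e production set \<Rightarrow> 'e letter list \<Rightarrow> 'e letter list set" where
  "glang G s = {t. (s, t) \<in> (gstep G)\<^sup>*}"

text \<open>A g-sequent Gamma |- Delta: Gamma is the set of edge atoms (w, a, u) (meaning w E_a u),
  Delta the set of prefixed sequents (w, S) (meaning w : S).  The vertex set is the set of
  prefixes in Delta, the labelling is Delta read as a function.\<close>
type_synonym ('v, 'e) atom = "'v \<times> 'e \<times> 'v"
type_synonym ('v, 'e, 's) gseq = "('v, 'e) atom set \<times> ('v \<times> 's) set"

definition verts :: "('v, 'e, 's) gseq \<Rightarrow> 'v set" where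
  "verts G = fst ` snd G"

definition wf_gseq :: "('v, 'e, 's) gseq \<Rightarrow> bool" where
  "wf_gseq G \<longleftrightarrow>
     (\<forall>w S S'. (w, S) \<in> snd G \<longrightarrow> (w, S') \<in> snd G \<longrightarrow> S = S') \<and>
     (\<forall>w a u. (w, a, u) \<in> fst G \<longrightarrow> w \<in> verts G \<and> u \<in> verts G)"

fun letter_edge :: "('v, 'e) atom set \<Rightarrow> 'v \<Rightarrow> 'e letter \<Rightarrow> 'v \<Rightarrow> bool" where
  "letter_edge \<Gamma> u (Fw a) w \<longleftrightarrow> (u, a, w) \<in> \<Gamma>"
| "letter_edge \<Gamma> u (Bw a) w \<longleftrightarrow> (w, a, u) \<in> \<Gamma>"

fun path :: "('v, 'e) atom set \<Rightarrow> 'v \<Rightarrow> 'e letter list \<Rightarrow> 'v \<Rightarrow> bool" where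
  "path \<Gamma> u [] w \<longleftrightarrow> u = w"
| "path \<Gamma> u (x # s) w \<longleftrightarrow> (\<exists>v. letter_edge \<Gamma> u x v \<and> path \<Gamma> v s w)"

definition lpath :: "('v, 'e) atom set \<Rightarrow> 'v \<Rightarrow> 'e letter list set \<Rightarrow> 'v \<Rightarrow> bool" where
  "lpath \<Gamma> u L w \<longleftrightarrow> (\<exists>s\<in>L. path \<Gamma> u s w)"

text \<open>The edge atom corresponding to a letter step v --x--> z (v E_{bar a} z means z E_a v).\<close>
fun letter_atom :: "'v \<Rightarrow> 'e letter \<Rightarrow> 'v \<Rightarrow> ('v, 'e) atom" where
  "letter_atom v (Fw a) z = (v, a, z)"
| "letter_atom v (Bw a) z = (z, a, v)"

text \<open>Sigma is a set of atoms w E_s u, for some choice of intermediate vertices vs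
  (vs ! 0 = w, vs ! length s = u; for s empty this means w = u and Sigma is empty).\<close>
definition path_atoms :: "'v \<Rightarrow> 'e letter list \<Rightarrow> 'v \<Rightarrow> ('v, 'e) atom set \<Rightarrow> bool" where
  "path_atoms w s u \<Sigma> \<longleftrightarrow>
     (\<exists>vs. length vs = Suc (length s) \<and> vs ! 0 = w \<and> vs ! length s = u \<and>
           \<Sigma> = {letter_atom (vs ! i) (s ! i) (vs ! Suc i) | i. i < length s})"

text \<open>A rule is the set of its instances (list of premises, conclusion).\<close>
type_synonym ('v, 'e, 's) rule = "(('v, 'e, 's) gseq list \<times> ('v, 'e, 's) gseq) set"

inductive_set derivable :: "('v, 'e, 's) rule set \<Rightarrow> ('v, 'e, 's) gseq set \<Rightarrow> ('v, 'e, 's) gseq set"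
  for RS Hyp where
  hyp: "G \<in> Hyp \<Longrightarrow> G \<in> derivable RS Hyp"
| rule: "r \<in> RS \<Longrightarrow> (ps, c) \<in> r \<Longrightarrow> (\<forall>p\<in>set ps. p \<in> derivable RS Hyp) \<Longrightarrow> c \<in> derivable RS Hyp"

definition derivable1 :: "('v, 'e, 's) rule set \<Rightarrow> ('v, 'e, 's) gseq set \<Rightarrow> ('v, 'e, 's) gseq set" where
  "derivable1 RS Hyp = {c. \<exists>r\<in>RS. \<exists>ps. (ps, c) \<in> r \<and> (\<forall>p\<in>set ps. p \<in> derivable RS Hyp)}"

text \<open>Ordered rule set: list of (i_j, R_j), i_j in {0,1}; derivations first use R_1
  (at least i_1 times), then R_2 (at least i_2 times), etc., top to bottom.\<close>
fun ord_derivable :: "(nat \<times> ('v, 'e, 's) rule set) list \<Rightarrow> ('v, 'e, 's) gseq set \<Rightarrow> ('v, 'e, 's) gseq set" where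
  "ord_derivable [] Hyp = Hyp"
| "ord_derivable ((i, RS) # rest) Hyp =
     ord_derivable rest (if i = 0 then derivable RS Hyp else derivable1 RS Hyp)"

definition simulated_by :: "('v, 'e, 's) rule set \<Rightarrow> (nat \<times> ('v, 'e, 's) rule set) list \<Rightarrow> bool" where
  "simulated_by R1 Ord \<longleftrightarrow> (\<forall>r\<in>R1. \<forall>(ps, c)\<in>r. c \<in> ord_derivable Ord (set ps))"

definition sat_constraint :: "('s list \<times> ('v \<times> 's) set) set \<Rightarrow> 's list \<Rightarrow> ('v \<times> 's) set \<Rightarrow> bool" where
  "sat_constraint R xs \<Delta> \<longleftrightarrow>
     (\<exists>\<pi>. \<pi> permutes {..<length xs} \<and> (map (\<lambda>i. xs ! \<pi> i) [0..<length xs], \<Delta>) \<in> R)"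

text \<open>The reachability rule r(C,R), with C given by the list cs of pairs (a_i, G_i):
  the i-th premise must satisfy w --G_i(a_i)--> u.\<close>
definition reach_rule ::
  "('e \<times> 'e production set) list \<Rightarrow> ('s list \<times> ('v \<times> 's) set) set \<Rightarrow> ('v, 'e, 's) rule" where
  "reach_rule cs R =
    {(ps, c) | ps c \<Gamma> \<Delta> w u S S' Ss Ss'.
       length Ss = length cs \<and> length Ss' = length cs \<and>
       ps = map (\<lambda>i. (\<Gamma>, insert (w, Ss ! i) (insert (u, Ss' ! i) \<Delta>))) [0..<length cs] \<and>
       c = (\<Gamma>, insert (w, S) (insert (u, S') \<Delta>)) \<and>
       wf_gseq c \<and> (w, S) \<notin> \<Delta> \<and> (u, S') \<notin> \<Delta> \<and> (w, S) \<noteq> (u, S') \<and>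
       (\<forall>i<length cs. wf_gseq (ps ! i) \<and> (w, Ss ! i) \<notin> \<Delta> \<and> (u, Ss' ! i) \<notin> \<Delta> \<and>
           (w, Ss ! i) \<noteq> (u, Ss' ! i) \<and>
           lpath \<Gamma> w (glang (snd (cs ! i)) [Fw (fst (cs ! i))]) u) \<and>
       sat_constraint R (concat (map (\<lambda>i. [Ss ! i, Ss' ! i]) [0..<length cs]) @ [S, S']) \<Delta>}"

definition is_reach_param :: "('e \<times> 'e production set) list \<Rightarrow> bool" where
  "is_reach_param cs \<longleftrightarrow> (\<forall>(a, G)\<in>set cs. esystem G)"

definition sys_of_rule :: "('e \<times> 'e production set) list \<Rightarrow> 'e production set" where
  "sys_of_rule cs = (\<Union>(a, G)\<in>set cs. G)"

definition fracture :: "('e \<times> 'e production set) list \<Rightarrow> 'e production set \<Rightarrow> ('e \<times> 'e production set) list" where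
  "fracture cs G = map (\<lambda>(a, Gi). (a, Gi - G)) cs"

text \<open>A production pair (p, bar p) is represented as the (two-element) set {p, bar p}.\<close>
definition prod_pairs :: "'e production set \<Rightarrow> 'e production set set" where
  "prod_pairs G = {{p, pbar p} | p. p \<in> G}"

text \<open>Forward Horn rule for a --> s: premise Gamma, w E_s u, w E_a u |- Delta,
  conclusion Gamma, w E_s u |- Delta (commas: disjoint unions).\<close>
definition horn_fw :: "'e \<Rightarrow> 'e letter list \<Rightarrow> ('v, 'e, 's) rule" where
  "horn_fw a s = {([(\<Gamma> \<union> \<Sigma> \<union> {(w, a, u)}, \<Delta>)], (\<Gamma> \<union> \<Sigma>, \<Delta>)) | \<Gamma> \<Sigma> \<Delta> w u.
      path_atoms w s u \<Sigma> \<and> \<Gamma> \<inter> \<Sigma> = {} \<and> (w, a, u) \<notin> \<Gamma> \<union> \<Sigma> \<and>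
      wf_gseq (\<Gamma> \<union> \<Sigma> \<union> {(w, a, u)}, \<Delta>) \<and> wf_gseq (\<Gamma> \<union> \<Sigma>, \<Delta>)}"

definition horn_bw :: "'e \<Rightarrow> 'e letter list \<Rightarrow> ('v, 'e, 's) rule" where
  "horn_bw a s = {([(\<Gamma> \<union> \<Sigma> \<union> {(u, a, w)}, \<Delta>)], (\<Gamma> \<union> \<Sigma>, \<Delta>)) | \<Gamma> \<Sigma> \<Delta> w u.
      path_atoms w s u \<Sigma> \<and> \<Gamma> \<inter> \<Sigma> = {} \<and> (u, a, w) \<notin> \<Gamma> \<union> \<Sigma> \<and>
      wf_gseq (\<Gamma> \<union> \<Sigma> \<union> {(u, a, w)}, \<Delta>) \<and> wf_gseq (\<Gamma> \<union> \<Sigma>, \<Delta>)}"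

fun horn_of_prod :: "'e production \<Rightarrow> ('v, 'e, 's) rule" where
  "horn_of_prod (Fw a, s) = horn_fw a s"
| "horn_of_prod (Bw a, s) = horn_bw a s"

text \<open>H(p, bar p): the Horn rule of a production pair, read off from a member p of the pair
  (both members give the same rule).\<close>
definition horn_of_pair :: "'e production set \<Rightarrow> ('v, 'e, 's) rule" where
  "horn_of_pair P = horn_of_prod (SOME p. p \<in> P)"

definition dep :: "'e production set \<Rightarrow> 'e production set \<Rightarrow> bool" where
  "dep P P' \<longleftrightarrow> P \<noteq> P' \<and>
     (\<exists>p\<in>P. \<exists>p'\<in>P'. fst p' \<in> set (snd p) \<or> fst p' \<in> set (sbar (snd p)))"

text \<open>The dependency graph order on a set V of Horn rules (identified with their
  production pairs): reflexive-transitive closure of dep within V.\<close>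
definition dg_le :: "'e production set set \<Rightarrow> ('e production set \<times> 'e production set) set" where
  "dg_le V = {(P, P'). P \<in> V \<and> P' \<in> V \<and> dep P P'}\<^sup>*"

definition fracturable :: "'e production set set \<Rightarrow> 'e production set set \<Rightarrow> bool" where
  "fracturable V V' \<longleftrightarrow> V' \<subseteq> V \<and> (\<forall>v\<in>V'. \<forall>v'\<in>V - V'. (v, v') \<notin> dg_le V)"

definition pw_rule :: "('v, 'e, 's) rule" where
  "pw_rule = {([(\<Gamma>, \<Delta>)], (\<Gamma> \<union> {(w, a, u)}, \<Delta>)) | \<Gamma> \<Delta> w a u.
      (w, a, u) \<notin> \<Gamma> \<and> w \<in> verts (\<Gamma>, \<Delta>) \<and> u \<in> verts (\<Gamma>, \<Delta>) \<and>
      wf_gseq (\<Gamma>, \<Delta>) \<and> wf_gseq (\<Gamma> \<union> {(w, a, u)}, \<Delta>)}"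

end

theory Submission
  imports Defs
begin

(*
  Take an instance of r(C,R) with conclusion Gamma |- Delta.  Its i-th premise provides a path
  from w to u labelled by a word t derived from a_i in G_i.  Undo this derivation step by step,
  keeping the path.  A step x --> r of a production in G(H') is not undone by rewriting: by
  fracturability every production that can rewrite a letter of r belongs to G(H') as well, so r
  still labels a segment of the current path, and an x-edge is added across that segment instead.
  The result is a word derived from a_i in G_i - G(H') that labels a path in a finite extension
  Gamma' of Gamma.  Path weakening turns the premises into premises over Gamma', the fractured
  rule concludes Gamma' |- Delta, and the Horn rules of H' delete the added edges again in the
  reverse order of their addition.
*)

section \<open>Paths and well-formed g-sequents\<close>

lemma lbar_lbar [simp]: "lbar (lbar x) = x"
  by (cases x) auto

lemma sbar_sbar [simp]: "sbar (sbar s) = s"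
  by (simp add: sbar_def rev_map comp_def)

lemma pbar_pbar [simp]: "pbar (pbar p) = p"
  by (simp add: pbar_def)

lemma letter_atom_lbar: "letter_atom v (lbar x) u = letter_atom u x v"
  by (cases x) auto

lemma letter_edge_iff_letter_atom: "letter_edge \<Gamma> u x v \<longleftrightarrow> letter_atom u x v \<in> \<Gamma>"
  by (cases x) auto

lemma path_append: "path \<Gamma> v (s @ t) w \<longleftrightarrow> (\<exists>m. path \<Gamma> v s m \<and> path \<Gamma> m t w)"
  by (induction s arbitrary: v) auto

lemma path_mono: "path \<Gamma> v s w \<Longrightarrow> \<Gamma> \<subseteq> \<Gamma>' \<Longrightarrow> path \<Gamma>' v s w"
  by (induction s arbitrary: v) (auto simp: letter_edge_iff_letter_atom)

lemma lpath_mono: "lpath \<Gamma> v L w \<Longrightarrow> \<Gamma> \<subseteq> \<Gamma>' \<Longrightarrow> lpath \<Gamma>' v L w"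
  unfolding lpath_def by (meson path_mono)

lemma path_sbar: "path \<Gamma> v s w \<Longrightarrow> path \<Gamma> w (sbar s) v"
proof (induction s arbitrary: v)
  case (Cons x s)
  then obtain m where "letter_edge \<Gamma> v x m" "path \<Gamma> w (sbar s) m"
    by auto
  moreover have "letter_edge \<Gamma> m (lbar x) v \<longleftrightarrow> letter_edge \<Gamma> v x m"
    by (simp add: letter_edge_iff_letter_atom letter_atom_lbar)
  ultimately show ?case
    by (auto simp: sbar_def path_append)
qed (simp add: sbar_def)

lemma path_imp_path_atoms:
  assumes "path \<Gamma> v s w"
  obtains \<Sigma> where "path_atoms v s w \<Sigma>" and "\<Sigma> \<subseteq> \<Gamma>"
proof -
  have "\<exists>vs. length vs = Suc (length s) \<and> vs ! 0 = v \<and> vs ! length s = w \<and>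
      (\<forall>i<length s. letter_atom (vs ! i) (s ! i) (vs ! Suc i) \<in> \<Gamma>)"
    using assms
  proof (induction s arbitrary: v)
    case Nil
    then show ?case
      by (intro exI[of _ "[v]"]) auto
  next
    case (Cons x s)
    then obtain m where edge: "letter_edge \<Gamma> v x m" and "path \<Gamma> m s w"
      by auto
    with Cons.IH obtain vs where "length vs = Suc (length s)" "vs ! 0 = m" "vs ! length s = w"
      "\<forall>i<length s. letter_atom (vs ! i) (s ! i) (vs ! Suc i) \<in> \<Gamma>"
      by blast
    with edge show ?case
      by (intro exI[of _ "v # vs"]) (auto simp: letter_edge_iff_letter_atom nth_Cons split: nat.split)
  qed
  then show thesis
    using that unfolding path_atoms_def by blast
qed

lemma path_target_in_verts:
  assumes "path \<Gamma> v s w" and "wf_gseq (\<Gamma>, \<Delta>)" and "v \<in> verts (\<Gamma>, \<Delta>)"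
  shows "w \<in> verts (\<Gamma>, \<Delta>)"
  using assms
proof (induction s arbitrary: v)
  case (Cons x s)
  then obtain m where "letter_edge \<Gamma> v x m" "path \<Gamma> m s w"
    by auto
  moreover from this(1) have "m \<in> verts (\<Gamma>, \<Delta>)"
    using Cons.prems(2) by (cases x) (auto simp: wf_gseq_def)
  ultimately show ?case
    using Cons.IH Cons.prems(2) by blast
qed simp

lemma wf_gseq_antimono: "wf_gseq (\<Gamma>', \<Delta>) \<Longrightarrow> \<Gamma> \<subseteq> \<Gamma>' \<Longrightarrow> wf_gseq (\<Gamma>, \<Delta>)"
  by (auto simp: wf_gseq_def verts_def)

lemma wf_gseq_insert_letter_atom:
  "wf_gseq (insert (letter_atom v x w) \<Gamma>, \<Delta>) \<longleftrightarrow>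
     wf_gseq (\<Gamma>, \<Delta>) \<and> v \<in> verts (\<Gamma>, \<Delta>) \<and> w \<in> verts (\<Gamma>, \<Delta>)"
  by (cases x) (auto simp: wf_gseq_def verts_def)

lemma wf_gseq_same_verts:
  assumes "wf_gseq (\<Gamma>, \<Delta>)" and "wf_gseq (\<Gamma>', \<Delta>')" and "fst ` \<Delta> = fst ` \<Delta>'"
  shows "wf_gseq (\<Gamma>', \<Delta>)"
  using assms by (simp add: wf_gseq_def verts_def)

section \<open>Path weakening and Horn rules\<close>

lemma derivable_trans:
  assumes "G \<in> derivable RS {G'}" and "G' \<in> derivable RS Hyp"
  shows "G \<in> derivable RS Hyp"
  using assms(1)
proof (induction rule: derivable.induct)
  case (hyp G)
  with assms(2) show ?case
    by simp
next
  case (rule r ps c)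
  then show ?case
    by (intro derivable.rule[of r _ ps]) auto
qed

lemma pw_ruleI:
  assumes "(w, a, u) \<notin> \<Gamma>" and "wf_gseq (insert (w, a, u) \<Gamma>, \<Delta>)"
  shows "([(\<Gamma>, \<Delta>)], (insert (w, a, u) \<Gamma>, \<Delta>)) \<in> pw_rule"
proof -
  have "wf_gseq (\<Gamma>, \<Delta>)" "w \<in> verts (\<Gamma>, \<Delta>)" "u \<in> verts (\<Gamma>, \<Delta>)"
    using assms(2) wf_gseq_insert_letter_atom[of w "Fw a" u \<Gamma> \<Delta>] by simp_all
  with assms show ?thesis
    unfolding pw_rule_def mem_Collect_eq
    by (intro exI[of _ \<Gamma>] exI[of _ \<Delta>] exI[of _ w] exI[of _ a] exI[of _ u]) simp
qed

lemma derivable_pw_rule_union: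
  assumes "finite E" and "(\<Gamma>, \<Delta>) \<in> derivable {pw_rule} Hyp" and "wf_gseq (\<Gamma> \<union> E, \<Delta>)"
  shows "(\<Gamma> \<union> E, \<Delta>) \<in> derivable {pw_rule} Hyp"
  using assms
proof (induction E rule: finite_induct)
  case empty
  then show ?case
    by simp
next
  case (insert e E)
  obtain w a u where e: "e = (w, a, u)"
    by (cases e) auto
  have wf: "wf_gseq (insert (w, a, u) (\<Gamma> \<union> E), \<Delta>)"
    using insert.prems(2) e by simp
  then have "wf_gseq (\<Gamma> \<union> E, \<Delta>)"
    by (rule wf_gseq_antimono) blast
  with insert.IH insert.prems(1) have IH: "(\<Gamma> \<union> E, \<Delta>) \<in> derivable {pw_rule} Hyp"
    by blast
  show ?case
  proof (cases "e \<in> \<Gamma> \<union> E")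
    case True
    then have "\<Gamma> \<union> insert e E = \<Gamma> \<union> E"
      by blast
    with IH show ?thesis
      by simp
  next
    case False
    have "([(\<Gamma> \<union> E, \<Delta>)], (insert (w, a, u) (\<Gamma> \<union> E), \<Delta>)) \<in> pw_rule"
      using False e wf by (intro pw_ruleI) auto
    then have "(insert (w, a, u) (\<Gamma> \<union> E), \<Delta>) \<in> derivable {pw_rule} Hyp"
      by (rule derivable.rule[rotated]) (use IH in simp_all)
    with e show ?thesis
      by (metis Un_insert_right)
  qed
qed

lemma horn_of_prod_instance:
  assumes path: "path \<Gamma> v s w" and new: "letter_atom v y w \<notin> \<Gamma>"
    and wf: "wf_gseq (insert (letter_atom v y w) \<Gamma>, \<Delta>)"
  shows "([(insert (letter_atom v y w) \<Gamma>, \<Delta>)], (\<Gamma>, \<Delta>)) \<in> horn_of_prod (y, s)"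
proof -
  obtain \<Sigma> where \<Sigma>: "path_atoms v s w \<Sigma>" "\<Sigma> \<subseteq> \<Gamma>"
    using path by (rule path_imp_path_atoms)
  then have \<Gamma>: "(\<Gamma> - \<Sigma>) \<union> \<Sigma> = \<Gamma>" and disj: "(\<Gamma> - \<Sigma>) \<inter> \<Sigma> = {}"
    by blast+
  have "wf_gseq (\<Gamma>, \<Delta>)"
    using wf by (rule wf_gseq_antimono) blast
  show ?thesis
  proof (cases y)
    case (Fw a)
    show ?thesis
      unfolding Fw horn_of_prod.simps horn_fw_def mem_Collect_eq
      by (intro exI[of _ "\<Gamma> - \<Sigma>"] exI[of _ \<Sigma>] exI[of _ \<Delta>] exI[of _ v] exI[of _ w])
        (use \<Sigma> \<Gamma> disj new wf \<open>wf_gseq (\<Gamma>, \<Delta>)\<close> Fw in simp)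
  next
    case (Bw a)
    show ?thesis
      unfolding Bw horn_of_prod.simps horn_bw_def mem_Collect_eq
      by (intro exI[of _ "\<Gamma> - \<Sigma>"] exI[of _ \<Sigma>] exI[of _ \<Delta>] exI[of _ v] exI[of _ w])
        (use \<Sigma> \<Gamma> disj new wf \<open>wf_gseq (\<Gamma>, \<Delta>)\<close> Bw in simp)
  qed
qed

lemma horn_of_pair_instance:
  assumes "path \<Gamma> v s w" and "letter_atom v y w \<notin> \<Gamma>"
    and "wf_gseq (insert (letter_atom v y w) \<Gamma>, \<Delta>)"
  shows "([(insert (letter_atom v y w) \<Gamma>, \<Delta>)], (\<Gamma>, \<Delta>)) \<in> horn_of_pair {(y, s), pbar (y, s)}"
proof -
  \<comment> \<open>\<open>horn_of_pair\<close> reads the rule off an unspecified member of the pair\<close>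
  have "(SOME p. p \<in> {(y, s), pbar (y, s)}) \<in> {(y, s), pbar (y, s)}"
    by (rule someI[of _ "(y, s)"]) simp
  moreover have "([(insert (letter_atom v y w) \<Gamma>, \<Delta>)], (\<Gamma>, \<Delta>)) \<in> horn_of_prod (y, s)"
    using assms by (rule horn_of_prod_instance)
  moreover have "([(insert (letter_atom v y w) \<Gamma>, \<Delta>)], (\<Gamma>, \<Delta>)) \<in> horn_of_prod (pbar (y, s))"
    using horn_of_prod_instance[OF path_sbar[OF assms(1)], of "lbar y"] assms(2,3)
    by (simp add: pbar_def letter_atom_lbar)
  ultimately show ?thesis
    unfolding horn_of_pair_def by auto
qed

definition removable_extension ::
  "('v, 'e, 's) rule set \<Rightarrow> ('v \<times> 's) set \<Rightarrow> ('v, 'e) atom set \<Rightarrow> ('v, 'e) atom set \<Rightarrow> bool" where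
  "removable_extension HR \<Delta> \<Gamma> \<Gamma>' \<longleftrightarrow>
     \<Gamma> \<subseteq> \<Gamma>' \<and> finite (\<Gamma>' - \<Gamma>) \<and> wf_gseq (\<Gamma>', \<Delta>) \<and> (\<Gamma>, \<Delta>) \<in> derivable HR {(\<Gamma>', \<Delta>)}"

lemma removable_extension_refl: "wf_gseq (\<Gamma>, \<Delta>) \<Longrightarrow> removable_extension HR \<Delta> \<Gamma> \<Gamma>"
  by (simp add: removable_extension_def derivable.hyp)

lemma removable_extension_insert_horn_edge:
  assumes ext: "removable_extension (horn_of_pair ` H) \<Delta> \<Gamma> \<Gamma>'"
    and pair: "{(x, r), pbar (x, r)} \<in> H"
    and path: "path \<Gamma>' v r w" and v: "v \<in> verts (\<Gamma>', \<Delta>)"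
  shows "removable_extension (horn_of_pair ` H) \<Delta> \<Gamma> (insert (letter_atom v x w) \<Gamma>')"
proof (cases "letter_atom v x w \<in> \<Gamma>'")
  case True
  with ext show ?thesis
    by (simp add: insert_absorb)
next
  case False
  let ?\<Gamma>'' = "insert (letter_atom v x w) \<Gamma>'"
  have wf: "wf_gseq (\<Gamma>', \<Delta>)"
    using ext by (simp add: removable_extension_def)
  moreover have "w \<in> verts (\<Gamma>', \<Delta>)"
    using path wf v by (rule path_target_in_verts)
  ultimately have wf'': "wf_gseq (?\<Gamma>'', \<Delta>)"
    using v by (simp add: wf_gseq_insert_letter_atom)
  have "([(?\<Gamma>'', \<Delta>)], (\<Gamma>', \<Delta>)) \<in> horn_of_pair {(x, r), pbar (x, r)}"
    using path False wf'' by (rule horn_of_pair_instance)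
  then have "(\<Gamma>', \<Delta>) \<in> derivable (horn_of_pair ` H) {(?\<Gamma>'', \<Delta>)}"
    by (rule derivable.rule[rotated]) (use pair in \<open>simp_all add: derivable.hyp\<close>)
  then have "(\<Gamma>, \<Delta>) \<in> derivable (horn_of_pair ` H) {(?\<Gamma>'', \<Delta>)}"
    using ext by (auto simp: removable_extension_def intro: derivable_trans)
  with ext wf'' show ?thesis
    by (auto simp: removable_extension_def insert_Diff_if)
qed

lemma removable_extension_pw_rule:
  assumes "removable_extension HR \<Delta>\<^sub>0 \<Gamma> \<Gamma>'" and "(\<Gamma>, \<Delta>) \<in> derivable {pw_rule} Hyp"
    and "wf_gseq (\<Gamma>', \<Delta>)"
  shows "(\<Gamma>', \<Delta>) \<in> derivable {pw_rule} Hyp"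
proof -
  have "finite (\<Gamma>' - \<Gamma>)" and \<Gamma>': "\<Gamma> \<union> (\<Gamma>' - \<Gamma>) = \<Gamma>'"
    using assms(1) by (auto simp: removable_extension_def)
  with assms(2,3) show ?thesis
    using derivable_pw_rule_union[of "\<Gamma>' - \<Gamma>" \<Gamma> \<Delta> Hyp] by simp
qed

lemma removable_extension_fold_production:
  assumes ext: "removable_extension (horn_of_pair ` H) \<Delta> \<Gamma> \<Gamma>'"
    and pair: "{(x, r), pbar (x, r)} \<in> H"
    and path: "path \<Gamma>' v (a @ r @ b) w" and v: "v \<in> verts (\<Gamma>', \<Delta>)"
  obtains \<Gamma>'' where "removable_extension (horn_of_pair ` H) \<Delta> \<Gamma> \<Gamma>''" and "\<Gamma>' \<subseteq> \<Gamma>''"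
    and "path \<Gamma>'' v (a @ x # b) w"
proof -
  obtain m1 m2 where a: "path \<Gamma>' v a m1" and r: "path \<Gamma>' m1 r m2" and b: "path \<Gamma>' m2 b w"
    using path by (auto simp: path_append)
  let ?\<Gamma>'' = "insert (letter_atom m1 x m2) \<Gamma>'"
  have "wf_gseq (\<Gamma>', \<Delta>)"
    using ext by (simp add: removable_extension_def)
  with a v have "m1 \<in> verts (\<Gamma>', \<Delta>)"
    by (blast intro: path_target_in_verts)
  with ext pair r have "removable_extension (horn_of_pair ` H) \<Delta> \<Gamma> ?\<Gamma>''"
    by (rule removable_extension_insert_horn_edge)
  moreover have "path ?\<Gamma>'' v (a @ x # b) w"
    using path_mono[OF a, of ?\<Gamma>''] path_mono[OF b, of ?\<Gamma>'']
    by (auto simp: path_append letter_edge_iff_letter_atom)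
  ultimately show thesis
    using that by blast
qed

section \<open>Rewriting with E-systems\<close>

lemma gstepI: "(x, r) \<in> G \<Longrightarrow> (u @ x # v, u @ r @ v) \<in> gstep G"
  unfolding gstep_def by force

lemma gstep_append_context:
  assumes "(s, t) \<in> gstep G"
  shows "(a @ s @ b, a @ t @ b) \<in> gstep G"
proof -
  obtain u x r v where "s = u @ [x] @ v" "t = u @ r @ v" "(x, r) \<in> G"
    using assms by (auto simp: gstep_def)
  then show ?thesis
    using gstepI[of x r G "a @ u" "v @ b"] by simp
qed

lemma gstep_rtrancl_append_context:
  "(s, t) \<in> (gstep G)\<^sup>* \<Longrightarrow> (a @ s @ b, a @ t @ b) \<in> (gstep G)\<^sup>*"
  by (induction rule: rtrancl_induct) (auto intro: rtrancl_into_rtrancl gstep_append_context)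

lemma gstep_rtrancl_append_split:
  assumes "(u @ v, z) \<in> (gstep G)\<^sup>*"
  shows "\<exists>u' v'. z = u' @ v' \<and> (u, u') \<in> (gstep G)\<^sup>* \<and> (v, v') \<in> (gstep G)\<^sup>*"
  using assms
proof (induction rule: rtrancl_induct)
  case (step y z)
  then obtain u' v' where y: "y = u' @ v'" and steps: "(u, u') \<in> (gstep G)\<^sup>*" "(v, v') \<in> (gstep G)\<^sup>*"
    by blast
  obtain a x r b where ab: "y = a @ [x] @ b" "z = a @ r @ b" "(x, r) \<in> G"
    using step.hyps(2) by (auto simp: gstep_def)
  have "u' @ v' = a @ x # b"
    using y ab(1) by simp
  then obtain us where "u' = a @ us \<and> us @ v' = x # b \<or> u' @ us = a \<and> v' = us @ x # b"
    unfolding append_eq_append_conv2 by blast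
  then show ?case
  proof (elim disjE conjE)
    assume u': "u' = a @ us" and v': "us @ v' = x # b"
    show ?thesis
    proof (cases us)
      case Nil
      with v' ab have "(v', r @ b) \<in> gstep G"
        using gstepI[of x r G "[]" b] by simp
      with Nil u' v' ab steps show ?thesis
        by (intro exI[of _ u'] exI[of _ "r @ b"]) auto
    next
      case (Cons x' us')
      with u' v' have "u' = a @ [x] @ us'" "b = us' @ v'"
        by auto
      with ab have "(u', a @ r @ us') \<in> gstep G"
        using gstepI[of x r G a us'] by simp
      with ab steps \<open>b = us' @ v'\<close> show ?thesis
        by (intro exI[of _ "a @ r @ us'"] exI[of _ v']) auto
    qed
  next
    assume "u' @ us = a" and "v' = us @ x # b"
    with ab have "(v', us @ r @ b) \<in> gstep G"
      using gstepI[of x r G us b] by simp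
    with ab steps \<open>u' @ us = a\<close> show ?thesis
      by (intro exI[of _ u'] exI[of _ "us @ r @ b"]) auto
  qed
qed blast

lemma gstep_rtrancl_stuck:
  assumes "(s, t) \<in> (gstep G)\<^sup>*" and "\<forall>q\<in>G. fst q \<notin> set s"
  shows "t = s"
  using assms
proof (induction rule: rtrancl_induct)
  case (step y z)
  then obtain u x r v where "s = u @ [x] @ v" "(x, r) \<in> G"
    by (auto simp: gstep_def)
  with step.prems show ?case
    by force
qed simp

section \<open>Fracturing a reachability rule\<close>

lemma prod_pairs_pair_mem:
  assumes "H \<subseteq> prod_pairs D" and "p \<in> \<Union>H"
  shows "{p, pbar p} \<in> H"
proof -
  obtain P where "P \<in> H" "p \<in> P"
    using assms(2) by blast
  moreover from this obtain q where "P = {q, pbar q}"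
    using assms(1) by (auto simp: prod_pairs_def)
  ultimately show ?thesis
    by (auto simp: insert_commute)
qed

lemma fracturable_rhs_closed:
  assumes fr: "fracturable (prod_pairs D) H" and xr: "(x, r) \<in> \<Union>H"
    and q: "q \<in> D" and y: "fst q \<in> set r"
  shows "q \<in> \<Union>H"
proof (rule ccontr)
  assume "q \<notin> \<Union>H"
  then have Q: "{q, pbar q} \<notin> H"
    by blast
  obtain P where P: "P \<in> H" "(x, r) \<in> P"
    using xr by blast
  have "{q, pbar q} \<in> prod_pairs D"
    unfolding prod_pairs_def using q by blast
  moreover have "P \<in> prod_pairs D"
    using P(1) fr by (auto simp: fracturable_def)
  moreover have "dep P {q, pbar q}"
    unfolding dep_def using P Q y by (metis insertI1 snd_conv)
  ultimately have "(P, {q, pbar q}) \<in> dg_le (prod_pairs D)"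
    unfolding dg_le_def by blast
  with fr P(1) Q \<open>{q, pbar q} \<in> prod_pairs D\<close> show False
    unfolding fracturable_def by blast
qed

lemma gstep_rtrancl_fracture_path:
  assumes "(s, t) \<in> (gstep G)\<^sup>*" and "G \<subseteq> D" and fr: "fracturable (prod_pairs D) H"
    and "removable_extension (horn_of_pair ` H) \<Delta> \<Gamma> \<Gamma>'" and "path \<Gamma>' v t w"
    and v: "v \<in> verts (\<Gamma>', \<Delta>)"
  shows "\<exists>\<Gamma>'' s'. removable_extension (horn_of_pair ` H) \<Delta> \<Gamma> \<Gamma>'' \<and> \<Gamma>' \<subseteq> \<Gamma>'' \<and>
    (s, s') \<in> (gstep (G - \<Union>H))\<^sup>* \<and> path \<Gamma>'' v s' w"
  using assms(1)
proof (induction rule: converse_rtrancl_induct)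
  case base
  with assms show ?case
    by blast
next
  case (step s y)
  then obtain \<Gamma>'' s'' where ext: "removable_extension (horn_of_pair ` H) \<Delta> \<Gamma> \<Gamma>''"
    and "\<Gamma>' \<subseteq> \<Gamma>''" and ys'': "(y, s'') \<in> (gstep (G - \<Union>H))\<^sup>*" and "path \<Gamma>'' v s'' w"
    by blast
  obtain a x r b where s: "s = a @ x # b" and y: "y = a @ r @ b" and xr: "(x, r) \<in> G"
    using step.hyps(1) by (auto simp: gstep_def)
  show ?case
  proof (cases "(x, r) \<in> \<Union>H")
    case False
    with s y xr have "(s, y) \<in> gstep (G - \<Union>H)"
      by (simp add: gstepI)
    with ext \<open>\<Gamma>' \<subseteq> \<Gamma>''\<close> ys'' \<open>path \<Gamma>'' v s'' w\<close> show ?thesis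
      by (blast intro: converse_rtrancl_into_rtrancl)
  next
    case True
    obtain a' r' b' where s'': "s'' = a' @ r' @ b'" and aa': "(a, a') \<in> (gstep (G - \<Union>H))\<^sup>*"
      and rr': "(r, r') \<in> (gstep (G - \<Union>H))\<^sup>*" and bb': "(b, b') \<in> (gstep (G - \<Union>H))\<^sup>*"
      using ys'' y gstep_rtrancl_append_split by metis
    \<comment> \<open>by fracturability, every production rewriting a letter of \<open>r\<close> lies in \<open>\<Union>H\<close>\<close>
    have "r' = r"
      using rr' by (rule gstep_rtrancl_stuck) (use fr True assms(2) fracturable_rhs_closed in blast)
    then have "path \<Gamma>'' v (a' @ r @ b') w"
      using \<open>path \<Gamma>'' v s'' w\<close> s'' by simp
    moreover have "{(x, r), pbar (x, r)} \<in> H"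
      using fr True by (auto simp: fracturable_def intro: prod_pairs_pair_mem)
    moreover have "v \<in> verts (\<Gamma>'', \<Delta>)"
      using v by (simp add: verts_def)
    ultimately obtain \<Gamma>\<^sub>x where "removable_extension (horn_of_pair ` H) \<Delta> \<Gamma> \<Gamma>\<^sub>x" "\<Gamma>'' \<subseteq> \<Gamma>\<^sub>x"
      "path \<Gamma>\<^sub>x v (a' @ x # b') w"
      using removable_extension_fold_production[OF ext] by metis
    moreover have "(s, a' @ x # b') \<in> (gstep (G - \<Union>H))\<^sup>*"
      using gstep_rtrancl_append_context[OF aa', of "[]" "x # b"]
        gstep_rtrancl_append_context[OF bb', of "a' @ [x]" "[]"] s by simp
    ultimately show ?thesis
      using \<open>\<Gamma>' \<subseteq> \<Gamma>''\<close> by blast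
  qed
qed

lemma lpath_glang_fracture:
  assumes "lpath \<Gamma>' v (glang G [x]) w" and "G \<subseteq> D" and "fracturable (prod_pairs D) H"
    and "removable_extension (horn_of_pair ` H) \<Delta> \<Gamma> \<Gamma>'" and "v \<in> verts (\<Gamma>', \<Delta>)"
  obtains \<Gamma>'' where "removable_extension (horn_of_pair ` H) \<Delta> \<Gamma> \<Gamma>''" and "\<Gamma>' \<subseteq> \<Gamma>''"
    and "lpath \<Gamma>'' v (glang (G - \<Union>H) [x]) w"
proof -
  obtain t where xt: "([x], t) \<in> (gstep G)\<^sup>*" and t: "path \<Gamma>' v t w"
    using assms(1) unfolding lpath_def glang_def by blast
  obtain \<Gamma>'' s' where "removable_extension (horn_of_pair ` H) \<Delta> \<Gamma> \<Gamma>''" "\<Gamma>' \<subseteq> \<Gamma>''"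
    "([x], s') \<in> (gstep (G - \<Union>H))\<^sup>*" "path \<Gamma>'' v s' w"
    using gstep_rtrancl_fracture_path[OF xt assms(2-4) t assms(5)] by blast
  with that show thesis
    unfolding lpath_def glang_def by blast
qed

lemma lpaths_glang_fracture:
  fixes n :: nat
  assumes "\<forall>i<n. lpath \<Gamma> v (glang (Gs i) [xs i]) w" and "\<forall>i<n. Gs i \<subseteq> D"
    and "fracturable (prod_pairs D) H" and "wf_gseq (\<Gamma>, \<Delta>)" and "v \<in> verts (\<Gamma>, \<Delta>)"
  shows "\<exists>\<Gamma>'. removable_extension (horn_of_pair ` H) \<Delta> \<Gamma> \<Gamma>' \<and>
    (\<forall>i<n. lpath \<Gamma>' v (glang (Gs i - \<Union>H) [xs i]) w)"
  using assms(1,2)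
proof (induction n)
  case 0
  show ?case
    using removable_extension_refl[OF assms(4)] by blast
next
  case (Suc n)
  then obtain \<Gamma>' where ext: "removable_extension (horn_of_pair ` H) \<Delta> \<Gamma> \<Gamma>'"
    and paths: "\<forall>i<n. lpath \<Gamma>' v (glang (Gs i - \<Union>H) [xs i]) w"
    by (auto simp: less_Suc_eq)
  have "\<Gamma> \<subseteq> \<Gamma>'"
    using ext by (simp add: removable_extension_def)
  moreover have "lpath \<Gamma> v (glang (Gs n) [xs n]) w"
    using Suc.prems(1) by simp
  ultimately have path: "lpath \<Gamma>' v (glang (Gs n) [xs n]) w"
    by (blast intro: lpath_mono)
  have v: "v \<in> verts (\<Gamma>', \<Delta>)"
    using assms(5) by (simp add: verts_def)
  have "Gs n \<subseteq> D"
    using Suc.prems(2) by simp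
  then obtain \<Gamma>'' where ext'': "removable_extension (horn_of_pair ` H) \<Delta> \<Gamma> \<Gamma>''"
    and "\<Gamma>' \<subseteq> \<Gamma>''" and new: "lpath \<Gamma>'' v (glang (Gs n - \<Union>H) [xs n]) w"
    by (rule lpath_glang_fracture[OF path _ assms(3) ext v])
  have "\<forall>i<n. lpath \<Gamma>'' v (glang (Gs i - \<Union>H) [xs i]) w"
    using paths lpath_mono[OF _ \<open>\<Gamma>' \<subseteq> \<Gamma>''\<close>] by blast
  with new have "\<forall>i<Suc n. lpath \<Gamma>'' v (glang (Gs i - \<Union>H) [xs i]) w"
    using less_Suc_eq by auto
  with ext'' show ?case
    by blast
qed

lemma length_fracture [simp]: "length (fracture cs G) = length cs"
  by (simp add: fracture_def)

lemma nth_fracture [simp]: "i < length cs \<Longrightarrow> fracture cs G ! i = (fst (cs ! i), snd (cs ! i) - G)"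
  by (simp add: fracture_def case_prod_beta)

lemma nth_subset_sys_of_rule: "i < length cs \<Longrightarrow> snd (cs ! i) \<subseteq> sys_of_rule cs"
  unfolding sys_of_rule_def by (force simp: case_prod_beta)

lemma reach_rule_premise:
  assumes "(ps, (\<Gamma>, \<Delta>)) \<in> reach_rule cs R" and "p \<in> set ps"
  shows "fst p = \<Gamma>" and "wf_gseq p"
  using assms unfolding reach_rule_def by (auto simp: in_set_conv_nth)

lemma reach_rule_fracture_extension:
  assumes inst: "(ps, (\<Gamma>, \<Delta>\<^sub>c)) \<in> reach_rule cs R" and fr: "fracturable (prod_pairs (sys_of_rule cs)) H"
  shows "\<exists>\<Gamma>'. removable_extension (horn_of_pair ` H) \<Delta>\<^sub>c \<Gamma> \<Gamma>' \<and>
    (map (\<lambda>p. (\<Gamma>', snd p)) ps, (\<Gamma>', \<Delta>\<^sub>c)) \<in> reach_rule (fracture cs (\<Union>H)) R"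
proof -
  from inst obtain \<Delta> w u S S' Ss Ss' where
    len: "length Ss = length cs" "length Ss' = length cs" and
    ps: "ps = map (\<lambda>i. (\<Gamma>, insert (w, Ss ! i) (insert (u, Ss' ! i) \<Delta>))) [0..<length cs]" and
    \<Delta>\<^sub>c: "\<Delta>\<^sub>c = insert (w, S) (insert (u, S') \<Delta>)" and
    wf: "wf_gseq (\<Gamma>, \<Delta>\<^sub>c)" and
    fresh: "(w, S) \<notin> \<Delta>" "(u, S') \<notin> \<Delta>" "(w, S) \<noteq> (u, S')" and
    prems: "\<forall>i<length cs. wf_gseq (ps ! i) \<and> (w, Ss ! i) \<notin> \<Delta> \<and> (u, Ss' ! i) \<notin> \<Delta> \<and>
      (w, Ss ! i) \<noteq> (u, Ss' ! i) \<and> lpath \<Gamma> w (glang (snd (cs ! i)) [Fw (fst (cs ! i))]) u" and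
    sat: "sat_constraint R (concat (map (\<lambda>i. [Ss ! i, Ss' ! i]) [0..<length cs]) @ [S, S']) \<Delta>"
    unfolding reach_rule_def by blast
  have w: "w \<in> verts (\<Gamma>, \<Delta>\<^sub>c)"
    using \<Delta>\<^sub>c by (simp add: verts_def)
  have "\<exists>\<Gamma>'. removable_extension (horn_of_pair ` H) \<Delta>\<^sub>c \<Gamma> \<Gamma>' \<and>
      (\<forall>i<length cs. lpath \<Gamma>' w (glang (snd (cs ! i) - \<Union>H) [Fw (fst (cs ! i))]) u)"
    by (rule lpaths_glang_fracture[where Gs = "\<lambda>i. snd (cs ! i)" and xs = "\<lambda>i. Fw (fst (cs ! i))",
          OF _ _ fr wf w]) (use prems nth_subset_sys_of_rule in auto)
  then obtain \<Gamma>' where ext: "removable_extension (horn_of_pair ` H) \<Delta>\<^sub>c \<Gamma> \<Gamma>'"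
    and paths: "\<forall>i<length cs. lpath \<Gamma>' w (glang (snd (cs ! i) - \<Union>H) [Fw (fst (cs ! i))]) u"
    by blast
  have "wf_gseq (\<Gamma>', \<Delta>\<^sub>c)"
    using ext by (simp add: removable_extension_def)
  then have "wf_gseq (\<Gamma>', insert (w, Ss ! i) (insert (u, Ss' ! i) \<Delta>))" if "i < length cs" for i
    using prems that ps \<Delta>\<^sub>c wf_gseq_same_verts[of \<Gamma> "insert (w, Ss ! i) (insert (u, Ss' ! i) \<Delta>)" \<Gamma>' \<Delta>\<^sub>c]
    by auto
  then have "(map (\<lambda>p. (\<Gamma>', snd p)) ps, (\<Gamma>', \<Delta>\<^sub>c)) \<in> reach_rule (fracture cs (\<Union>H)) R"
    unfolding reach_rule_def mem_Collect_eq
    by (intro exI[of _ "map (\<lambda>p. (\<Gamma>', snd p)) ps"] exI[of _ "(\<Gamma>', \<Delta>\<^sub>c)"] exI[of _ \<Gamma>'] exI[of _ \<Delta>]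
        exI[of _ w] exI[of _ u] exI[of _ S] exI[of _ S'] exI[of _ Ss] exI[of _ Ss'])
      (use len ps \<Delta>\<^sub>c \<open>wf_gseq (\<Gamma>', \<Delta>\<^sub>c)\<close> fresh prems paths sat in auto)
  with ext show ?thesis
    by blast
qed

theorem mainTheorem9:
  fixes cs :: "('e::finite \<times> 'e production set) list"
    and R :: "('s::countable list \<times> ('v \<times> 's) set) set"
    and H' :: "'e production set set"
  assumes "infinite (UNIV :: 's set)"
    and "is_reach_param cs"
    and "fracturable (prod_pairs (sys_of_rule cs)) H'"
  shows "simulated_by {reach_rule cs R :: ('v, 'e, 's) rule}
           [(0, {pw_rule}),
            (1, {reach_rule (fracture cs (\<Union>H')) R}),
            (0, horn_of_pair ` H')]"
  unfolding simulated_by_def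
proof (intro ballI, clarify)
  fix ps \<Gamma> \<Delta>
  assume inst: "(ps, \<Gamma>, \<Delta>) \<in> (reach_rule cs R :: ('v, 'e, 's) rule)"
  obtain \<Gamma>' where ext: "removable_extension (horn_of_pair ` H') \<Delta> \<Gamma> \<Gamma>'"
    and frac: "(map (\<lambda>p. (\<Gamma>', snd p)) ps, (\<Gamma>', \<Delta>)) \<in> reach_rule (fracture cs (\<Union>H')) R"
    using reach_rule_fracture_extension[OF inst assms(3)] by blast
  have "(\<Gamma>', snd p) \<in> derivable {pw_rule} (set ps)" if "p \<in> set ps" for p
  proof -
    have "(\<Gamma>, snd p) \<in> derivable {pw_rule} (set ps)"
      using that reach_rule_premise(1)[OF inst that] by (metis derivable.hyp prod.collapse)
    moreover have "wf_gseq (\<Gamma>', snd p)"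
      using reach_rule_premise(2)[OF frac] that by auto
    ultimately show ?thesis
      using ext by (blast intro: removable_extension_pw_rule)
  qed
  then have "\<forall>p\<in>set (map (\<lambda>p. (\<Gamma>', snd p)) ps).
      p \<in> derivable {reach_rule (fracture cs (\<Union>H')) R} (derivable {pw_rule} (set ps))"
    by (auto intro: derivable.hyp)
  with frac have "(\<Gamma>', \<Delta>) \<in> derivable1 {reach_rule (fracture cs (\<Union>H')) R} (derivable {pw_rule} (set ps))"
    unfolding derivable1_def by blast
  moreover have "(\<Gamma>, \<Delta>) \<in> derivable (horn_of_pair ` H') {(\<Gamma>', \<Delta>)}"
    using ext by (simp add: removable_extension_def)
  ultimately show "(\<Gamma>, \<Delta>) \<in> ord_derivable [(0, {pw_rule}), (1, {reach_rule (fracture cs (\<Union>H')) R}),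
      (0, horn_of_pair ` H')] (set ps)"
    by (auto intro: derivable_trans derivable.hyp)
qed

end
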